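(* Let $\mathcal{X}=\{1,\ldots,d\}$ and let $\mathcal{S}$ be the probability simplex in $\mathbb{R}^d$. Let $\{\Gamma(r)\}_{r\in\mathcal{S}}$ be a family of rate matrices on $\mathcal{X}$ such that: (a) for each $r\in\mathcal{S}$, $\Gamma(r)$ is the rate matrix of an ergodic Markov chain on $\mathcal{X}$ with stationary distribution $\pi(r)$; (b) there exist $R:\mathcal{X}\times[0,1]\to\mathbb{R}$ and $K:\mathcal{X}\times\mathbb{R}^d\to\mathbb{R}$ such that for each $x\in\mathcal{X}$, $R(x,\cdot)$ is continuous and $K(x,\cdot)$ is a $\mathcal{C}^1$ function on $\mathcal{S}$, and for each $r\in\mathcal{S}$, $$\pi(r)_x=\frac{\exp[-H(x,r)-R(x,r_x)]}{Z(r)},\quad x\in\mathcal{X},$$ where $H(x,r)=K(x,r)+\sum_{z\in\mathcal{X}}\big(\frac{\partial}{\partial r_x}K(z,r)\big)r_z$ and $Z(r)=\sum_{x\in\mathcal{X}}\exp[-H(x,r)-R(x,r_x)]$. Then $\{\Gamma(r)\}_{r\in\mathcal{S}}$ is locally Gibbs with potential $$U(r)=\sum_{z\in\mathcal{X}}\Big[\int_0^{r_z}R(z,w)\,dw+K(z,r)r_z\Big].$$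
   Context: A rate matrix on $\mathcal{X}$ is a $d\times d$ real matrix with nonnegative off-diagonal entries and zero row sums. Let $\mathcal{H}_1=\{v:\sum_iv_i=1\}$, $\mathcal{H}_0=\{v:\sum_iv_i=0\}$; a function is $\mathcal{C}^1$ on $\mathcal{S}$ if it is continuously differentiable on a relatively open subset of $\mathcal{H}_1$ containing $\mathcal{S}$, with gradient $DU(r)\in\mathcal{H}_0$, and $D_vU=\langle DU,v\rangle$. A family $\{\Gamma(r)\}$ is locally Gibbs with potential $U$ if (a) each $\Gamma(r)$ is the rate matrix of an ergodic Markov chain with stationary distribution $\pi(r)$, and (b) $U$ is $\mathcal{C}^1$ on $\mathcal{S}$ and $\frac{\pi(r)_y}{\pi(r)_x}=\exp(-D_{e_y-e_x}U(r))$ for all $x\ne y$ in $\mathcal{X}$ and $r\in\mathcal{S}$ ($e_x$ the unit vectors). *)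

theory Defs
  imports "HOL-Analysis.Analysis"
begin

text \<open>State space X = the finite type 'd; vectors in R^d are real^'d.\<close>

definition H1 :: "(real^'d) set" where
  "H1 = {v. (\<Sum>i\<in>UNIV. v$i) = 1}"

definition H0 :: "(real^'d) set" where
  "H0 = {v. (\<Sum>i\<in>UNIV. v$i) = 0}"

definition prob_simplex :: "(real^'d) set" where
  "prob_simplex = {v. (\<forall>i. 0 \<le> v$i) \<and> (\<Sum>i\<in>UNIV. v$i) = 1}"

definition C1_on :: "(real^'d) set \<Rightarrow> (real^'d \<Rightarrow> real) \<Rightarrow> bool" where
  "C1_on S U \<longleftrightarrow> (\<exists>A DU. openin (top_of_set H1) A \<and> S \<subseteq> A \<and>
      (\<forall>r\<in>A. DU r \<in> H0 \<and> (U has_derivative (\<lambda>v. DU r \<bullet> v)) (at r within A)) \<and>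
      continuous_on A DU)"

definition grad :: "(real^'d \<Rightarrow> real) \<Rightarrow> real^'d \<Rightarrow> real^'d" where
  "grad U r = (THE g. g \<in> H0 \<and> (U has_derivative (\<lambda>v. g \<bullet> v)) (at r within H1))"

definition dir_deriv :: "(real^'d \<Rightarrow> real) \<Rightarrow> real^'d \<Rightarrow> real^'d \<Rightarrow> real" where
  "dir_deriv U v r = grad U r \<bullet> v"

definition rate_matrix :: "real^'d^'d \<Rightarrow> bool" where
  "rate_matrix G \<longleftrightarrow> (\<forall>x y. x \<noteq> y \<longrightarrow> 0 \<le> G$x$y) \<and> (\<forall>x. (\<Sum>y\<in>UNIV. G$x$y) = 0)"

text \<open>Ergodic (irreducible) finite-state continuous-time chain.\<close>
definition ergodic_rate_matrix :: "real^'d^'d \<Rightarrow> bool" where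
  "ergodic_rate_matrix G \<longleftrightarrow> rate_matrix G \<and>
     (\<forall>x y. (x, y) \<in> {(a, b). a \<noteq> b \<and> 0 < G$a$b}\<^sup>*)"

definition stationary_dist :: "real^'d^'d \<Rightarrow> real^'d \<Rightarrow> bool" where
  "stationary_dist G p \<longleftrightarrow> p \<in> prob_simplex \<and> (\<forall>y. (\<Sum>x\<in>UNIV. p$x * G$x$y) = 0)"

definition unit_vec :: "'d \<Rightarrow> real^'d" where
  "unit_vec x = axis x 1"

definition locally_Gibbs :: "(real^'d \<Rightarrow> real^'d^'d) \<Rightarrow> (real^'d \<Rightarrow> real) \<Rightarrow> bool" where
  "locally_Gibbs \<Gamma> U \<longleftrightarrow>
     (\<forall>r\<in>prob_simplex. ergodic_rate_matrix (\<Gamma> r)) \<and>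
     C1_on prob_simplex U \<and>
     (\<forall>r\<in>prob_simplex. \<forall>p. stationary_dist (\<Gamma> r) p \<longrightarrow>
        (\<forall>x y. x \<noteq> y \<longrightarrow>
           p$y / p$x = exp (- dir_deriv U (unit_vec y - unit_vec x) r)))"

text \<open>R(x,.) is only given on [0,1]; we extend it constantly outside.\<close>
definition clamp01 :: "real \<Rightarrow> real" where
  "clamp01 w = max 0 (min 1 w)"

definition oriented_integral :: "real \<Rightarrow> real \<Rightarrow> (real \<Rightarrow> real) \<Rightarrow> real" where
  "oriented_integral a b f = (if a \<le> b then integral {a..b} f else - integral {b..a} f)"

end

theory Submission
  imports Defs
begin

text \<open>Inside the hyperplane \<open>H1\<close> a gradient is determined only up to multiples of the
  all-ones vector, so any continuous Euclidean gradient of the potential, projected onto \<open>H0\<close>,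
  witnesses its \<open>C\<^sup>1\<close> regularity and computes its directional derivatives along \<open>H0\<close>.
  Differentiating \<open>U\<close> term by term gives the Euclidean gradient with \<open>x\<close>-component
  \<open>R(x,r\<^sub>x) + K(x,r) + \<Sum>\<^sub>z r\<^sub>z \<partial>\<^sub>x K(z,r) = H(x,r) + R(x,r\<^sub>x)\<close>, so
  \<open>D\<^bsub>e\<^sub>y-e\<^sub>x\<^esub>U(r)\<close> is exactly the log-ratio of the Gibbs weights. Since an ergodic chain has only one
  stationary distribution, this identifies every stationary distribution with \<open>\<pi>(r)\<close>.\<close>

lemma has_real_derivative_oriented_integral:
  fixes f :: "real \<Rightarrow> real"
  assumes cf: "continuous_on UNIV f"
  shows "((\<lambda>t. oriented_integral 0 t f) has_real_derivative f t) (at t)"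
proof -
  define a where "a = -(\<bar>t\<bar>+1)"
  define b where "b = \<bar>t\<bar>+1"
  have ab: "a < 0" "0 < b" "a < t" "t < b" unfolding a_def b_def by auto
  have cab: "continuous_on {a..b} f" using cf continuous_on_subset by blast
  have int: "f integrable_on {a..b}" using cab integrable_continuous_real by blast
  have "((\<lambda>u. integral {a..u} f) has_vector_derivative f t) (at t within {a..b})"
    by (rule integral_has_vector_derivative[OF cab]) (use ab in auto)
  moreover have "at t within {a..b} = at t"
    by (rule at_within_interior) (use ab in auto)
  ultimately have d: "((\<lambda>u. integral {a..u} f - integral {a..0} f) has_real_derivative f t) (at t)"
    by (auto simp: has_real_derivative_iff_has_vector_derivative intro!: derivative_eq_intros)
  show ?thesis
  proof (rule has_field_derivative_transform_within_open[OF d, of "{a<..<b}"])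
    fix u assume u: "u \<in> {a<..<b}"
    show "integral {a..u} f - integral {a..0} f = oriented_integral 0 u f"
    proof (cases "0 \<le> u")
      case True
      have "f integrable_on {a..u}" by (rule integrable_subinterval_real[OF int]) (use u in auto)
      then have "integral {a..0} f + integral {0..u} f = integral {a..u} f"
        using Henstock_Kurzweil_Integration.integral_combine[where a=a and c=0 and b=u and f=f] True ab by simp
      then show ?thesis using True by (simp add: oriented_integral_def)
    next
      case False
      have "f integrable_on {a..0}" by (rule integrable_subinterval_real[OF int]) (use ab in auto)
      then have "integral {a..u} f + integral {u..0} f = integral {a..0} f"
        using Henstock_Kurzweil_Integration.integral_combine[where a=a and c=u and b=0 and f=f] False u by simp
      then show ?thesis using False by (simp add: oriented_integral_def)
    qed
  qed (use ab in auto)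
qed

lemma continuous_on_clamp01_comp:
  assumes "continuous_on {0..1} (f :: real \<Rightarrow> real)"
  shows "continuous_on UNIV (\<lambda>w. f (clamp01 w))"
proof (rule continuous_on_compose2[OF assms])
  show "continuous_on UNIV clamp01"
    unfolding clamp01_def by (intro continuous_intros)
qed (auto simp: clamp01_def)

lemma clamp01_simplex_component:
  assumes "r \<in> prob_simplex"
  shows "clamp01 (r$i) = r$i"
proof -
  have "r$i \<le> (\<Sum>j\<in>UNIV. r$j)"
    by (rule member_le_sum) (use assms in \<open>auto simp: prob_simplex_def\<close>)
  then show ?thesis using assms by (simp add: prob_simplex_def clamp01_def)
qed

lemma H1_diff_in_H0: "r \<in> H1 \<Longrightarrow> s \<in> H1 \<Longrightarrow> r - s \<in> H0"
  by (simp add: H0_def H1_def sum_subtractf)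

lemma unit_vec_diff_in_H0: "unit_vec y - unit_vec x \<in> H0"
  by (simp add: H0_def unit_vec_def sum_subtractf axis_def)

lemma has_derivative_within_openin_H1:
  assumes "openin (top_of_set H1) A" "r \<in> A" "(f has_derivative f') (at r within A)"
  shows "(f has_derivative f') (at r within H1)"
proof -
  obtain T where T: "open T" "A = H1 \<inter> T" using assms(1) openin_open by blast
  have "at r within A = at r within H1"
    by (rule at_within_nhd[where S=T]) (use T assms(2) in auto)
  then show ?thesis using assms(3) by simp
qed

text \<open>Both gradients differentiate \<open>U\<close> along the line \<open>r + t (g\<^sub>1 - g\<^sub>2)\<close>, which lies in \<open>H1\<close>;
  hence \<open>(g\<^sub>1 - g\<^sub>2) \<bullet> (g\<^sub>1 - g\<^sub>2) = 0\<close>.\<close>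
lemma H0_gradient_unique:
  fixes U :: "real^'d \<Rightarrow> real"
  assumes r: "r \<in> H1" and g: "g1 \<in> H0" "g2 \<in> H0"
    and d1: "(U has_derivative (\<lambda>v. g1 \<bullet> v)) (at r within H1)"
    and d2: "(U has_derivative (\<lambda>v. g2 \<bullet> v)) (at r within H1)"
  shows "g1 = g2"
proof -
  define v where "v = g1 - g2"
  have v: "(\<Sum>i\<in>UNIV. v$i) = 0" using g unfolding v_def H0_def by (simp add: sum_subtractf)
  define p where "p = (\<lambda>t::real. r + t *\<^sub>R v)"
  have p: "(p has_derivative (\<lambda>t. t *\<^sub>R v)) (at 0)"
    unfolding p_def by (auto intro!: derivative_eq_intros)
  have line: "range p \<subseteq> H1"
    using r v by (auto simp: p_def H1_def sum.distrib sum_distrib_left[symmetric])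
  have p0: "p 0 = r" by (simp add: p_def)
  have "(U has_derivative (\<lambda>v. g1 \<bullet> v)) (at (p 0) within range p)"
    using has_derivative_subset[OF d1 line] p0 by simp
  moreover have "(U has_derivative (\<lambda>v. g2 \<bullet> v)) (at (p 0) within range p)"
    using has_derivative_subset[OF d2 line] p0 by simp
  ultimately have "(\<lambda>t. g1 \<bullet> (t *\<^sub>R v)) = (\<lambda>t. g2 \<bullet> (t *\<^sub>R v))"
    by (intro has_derivative_unique[OF has_derivative_in_compose[OF p] has_derivative_in_compose[OF p]])
  then have "g1 \<bullet> v = g2 \<bullet> v" by (metis scaleR_one)
  then have "v \<bullet> v = 0" unfolding v_def by (simp add: inner_diff_left)
  then show ?thesis unfolding v_def by simp
qed

lemma grad_eqI:
  assumes "openin (top_of_set H1) A" "r \<in> A" "g \<in> H0"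
    and "(f has_derivative (\<lambda>v. g \<bullet> v)) (at r within A)"
  shows "grad f r = g"
  unfolding grad_def
proof (rule the_equality)
  have "A \<subseteq> H1" using openin_imp_subset[OF assms(1)] by simp
  then have r: "r \<in> H1" using assms(2) by blast
  have d: "(f has_derivative (\<lambda>v. g \<bullet> v)) (at r within H1)"
    using has_derivative_within_openin_H1 assms by blast
  then show "g \<in> H0 \<and> (f has_derivative (\<bullet>) g) (at r within H1)" using assms(3) by simp
  fix g' assume "g' \<in> H0 \<and> (f has_derivative (\<bullet>) g') (at r within H1)"
  then show "g' = g" using H0_gradient_unique[OF r _ assms(3) _ d] by blast
qed

lemma has_derivative_within_H1_cong:
  assumes d: "(f has_derivative (\<lambda>v. g \<bullet> v)) (at r within A)"
    and A: "A \<subseteq> H1" and r: "r \<in> H1"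
    and eq: "\<And>v. v \<in> H0 \<Longrightarrow> g \<bullet> v = g' \<bullet> v"
  shows "(f has_derivative (\<lambda>v. g' \<bullet> v)) (at r within A)"
proof -
  have "\<forall>\<^sub>F y in at r within A. (1 / norm (y - r)) *\<^sub>R (f y - (f r + g \<bullet> (y - r)))
      = (1 / norm (y - r)) *\<^sub>R (f y - (f r + g' \<bullet> (y - r)))"
    unfolding eventually_at_filter
    using A r eq H1_diff_in_H0 by (intro always_eventually) auto
  from tendsto_cong[OF this] show ?thesis
    using d bounded_linear_inner_right[of g'] by (simp add: has_derivative_within)
qed

definition proj_H0 :: "real^'d \<Rightarrow> real^'d" where
  "proj_H0 v = v - ((\<Sum>i\<in>UNIV. v$i) / real CARD('d)) *\<^sub>R (\<chi> i. 1)"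

lemma proj_H0_in_H0: "proj_H0 v \<in> H0"
  by (simp add: proj_H0_def H0_def sum_subtractf)

lemma inner_proj_H0:
  assumes "w \<in> H0"
  shows "proj_H0 v \<bullet> w = v \<bullet> w"
proof -
  have "(\<Sum>i\<in>UNIV. (\<Sum>j\<in>UNIV. v$j) / real CARD('d) * w$i)
      = (\<Sum>j\<in>UNIV. v$j) / real CARD('d) * (\<Sum>i\<in>UNIV. w$i)"
    by (rule sum_distrib_left[symmetric])
  then have "(\<Sum>i\<in>UNIV. (\<Sum>j\<in>UNIV. v$j) / real CARD('d) * w$i) = 0"
    using assms by (simp add: H0_def)
  then show ?thesis
    by (simp add: proj_H0_def inner_vec_def left_diff_distrib sum_subtractf)
qed

lemma continuous_on_proj_H0: "continuous_on A g \<Longrightarrow> continuous_on A (\<lambda>r. proj_H0 (g r))"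
  unfolding proj_H0_def by (intro continuous_intros) auto

lemma C1_on_if_continuous_gradient:
  fixes U :: "real^'d \<Rightarrow> real"
  assumes A: "openin (top_of_set H1) A" "S \<subseteq> A"
    and g: "continuous_on A g"
    and d: "\<And>r. r \<in> A \<Longrightarrow> (U has_derivative (\<lambda>v. g r \<bullet> v)) (at r within A)"
  shows "C1_on S U" and "r \<in> A \<Longrightarrow> v \<in> H0 \<Longrightarrow> grad U r \<bullet> v = g r \<bullet> v"
proof -
  have AH1: "A \<subseteq> H1" using openin_imp_subset[OF A(1)] by simp
  have dproj: "(U has_derivative (\<lambda>v. proj_H0 (g r) \<bullet> v)) (at r within A)" if "r \<in> A" for r
    by (rule has_derivative_within_H1_cong[OF d[OF that] AH1]) (use that AH1 in \<open>auto simp: inner_proj_H0\<close>)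
  show "C1_on S U"
    unfolding C1_on_def
    by (intro exI[of _ A] exI[of _ "\<lambda>r. proj_H0 (g r)"])
      (use A dproj proj_H0_in_H0 continuous_on_proj_H0[OF g] in blast)
  show "grad U r \<bullet> v = g r \<bullet> v" if "r \<in> A" "v \<in> H0"
    using grad_eqI[OF A(1) that(1) proj_H0_in_H0 dproj[OF that(1)]] inner_proj_H0[OF that(2)] by simp
qed

lemma C1_on_common_domain:
  assumes "\<forall>x::'i::finite. C1_on S (K x)"
  obtains A DK where "openin (top_of_set H1) A" "S \<subseteq> A"
    "\<And>x r. r \<in> A \<Longrightarrow> DK x r \<in> H0 \<and> (K x has_derivative (\<lambda>v. DK x r \<bullet> v)) (at r within A)"
    "\<And>x. continuous_on A (DK x)"
proof -
  obtain AK DK where AK: "\<And>x. openin (top_of_set H1) (AK x)" "\<And>x. S \<subseteq> AK x"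
      "\<And>x r. r \<in> AK x \<Longrightarrow> DK x r \<in> H0 \<and> (K x has_derivative (\<lambda>v. DK x r \<bullet> v)) (at r within AK x)"
      "\<And>x. continuous_on (AK x) (DK x)"
    using assms unfolding C1_on_def by metis
  define A where "A = (\<Inter>x. AK x)"
  have sub: "A \<subseteq> AK x" for x unfolding A_def by blast
  show thesis
  proof
    show "openin (top_of_set H1) A" unfolding A_def by (rule openin_INT2) (use AK in auto)
    show "S \<subseteq> A" unfolding A_def using AK(2) by blast
    show "DK x r \<in> H0 \<and> (K x has_derivative (\<lambda>v. DK x r \<bullet> v)) (at r within A)" if "r \<in> A" for x r
      using AK(3)[of r x] has_derivative_subset[of _ _ r "AK x" A] sub that by blast
    show "continuous_on A (DK x)" for x using continuous_on_subset[OF AK(4) sub] .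
  qed
qed

text \<open>The Euclidean gradient of \<open>r \<mapsto> \<Sum>\<^sub>z F\<^sub>z(r\<^sub>z) + K\<^sub>z(r) r\<^sub>z\<close> with \<open>F\<^sub>z' = f\<^sub>z\<close> and \<open>\<nabla>K\<^sub>z = DK\<^sub>z\<close>.\<close>
definition potential_grad ::
    "('d \<Rightarrow> real \<Rightarrow> real) \<Rightarrow> ('d \<Rightarrow> real^'d \<Rightarrow> real) \<Rightarrow> ('d \<Rightarrow> real^'d \<Rightarrow> real^'d) \<Rightarrow> real^'d \<Rightarrow> real^'d" where
  "potential_grad f K DK r = (\<chi> i. f i (r$i) + K i r + (\<Sum>z\<in>UNIV. r$z * DK z r $ i))"

lemma has_derivative_potential:
  assumes F: "\<And>z. (F z has_real_derivative f z (r$z)) (at (r$z))"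
    and K: "\<And>z. (K z has_derivative (\<lambda>v. DK z r \<bullet> v)) (at r within A)"
  shows "((\<lambda>r. \<Sum>z\<in>UNIV. F z (r$z) + K z r * r$z) has_derivative
      (\<lambda>v. potential_grad f K DK r \<bullet> v)) (at r within A)"
proof -
  have F': "((\<lambda>r. F z (r$z)) has_derivative (\<lambda>v. f z (r$z) * v$z)) (at r within A)" for z
    using has_derivative_compose[OF bounded_linear_imp_has_derivative[OF bounded_linear_vec_nth[of z]]
        has_field_derivative_imp_has_derivative[OF F]] .
  have K': "((\<lambda>r. K z r * r$z) has_derivative (\<lambda>v. K z r * v$z + (DK z r \<bullet> v) * r$z)) (at r within A)" for z
    using has_derivative_mult[OF K bounded_linear_imp_has_derivative[OF bounded_linear_vec_nth[of z]]]
    by simp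
  have swap: "(\<Sum>z\<in>UNIV. r$z * (\<Sum>i\<in>UNIV. v$i * DK z r $ i))
      = (\<Sum>i\<in>UNIV. v$i * (\<Sum>z\<in>UNIV. r$z * DK z r $ i))" for v
  proof -
    have "(\<Sum>z\<in>UNIV. r$z * (\<Sum>i\<in>UNIV. v$i * DK z r $ i))
        = (\<Sum>z\<in>UNIV. \<Sum>i\<in>UNIV. v$i * (r$z * DK z r $ i))"
      by (simp add: sum_distrib_left mult.left_commute)
    also have "\<dots> = (\<Sum>i\<in>UNIV. \<Sum>z\<in>UNIV. v$i * (r$z * DK z r $ i))"
      by (rule sum.swap)
    finally show ?thesis by (simp add: sum_distrib_left)
  qed
  show ?thesis
    by (rule has_derivative_eq_rhs[OF has_derivative_sum[OF has_derivative_add[OF F' K']]])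
      (simp add: fun_eq_iff potential_grad_def inner_vec_def sum.distrib algebra_simps swap)
qed

lemma continuous_on_potential_grad:
  assumes "\<And>i. continuous_on UNIV (f i)"
    and "\<And>i. continuous_on A (K i)" and "\<And>i. continuous_on A (DK i)"
  shows "continuous_on A (potential_grad f K DK)"
proof -
  have "continuous_on A (\<lambda>r. f i (r$i))" for i
    using continuous_on_compose2[OF assms(1) continuous_on_component[OF continuous_on_id]] by auto
  then show ?thesis
    unfolding potential_grad_def
    by (intro continuous_on_vec_lambda continuous_intros continuous_on_component assms)
qed

lemma nonneg_invariant_zero_propagates:
  fixes G :: "real^'d^'d" and w :: "real^'d"
  assumes rm: "rate_matrix G" and wn: "\<forall>x. 0 \<le> w$x"
    and st: "\<forall>y. (\<Sum>x\<in>UNIV. w$x * G$x$y) = 0"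
    and path: "(x, y) \<in> {(a, b). a \<noteq> b \<and> 0 < G$a$b}\<^sup>*" and wy: "w$y = 0"
  shows "w$x = 0"
  using path
proof (induction rule: converse_rtrancl_induct)
  case base
  then show ?case using wy .
next
  case (step a b)
  then have ab: "a \<noteq> b" "0 < G$a$b" and wb: "w$b = 0" by auto
  have "(\<Sum>x\<in>UNIV. w$x * G$x$b) = w$b * G$b$b + (\<Sum>x\<in>UNIV - {b}. w$x * G$x$b)"
    by (simp add: sum.remove[of UNIV b])
  then have s0: "(\<Sum>x\<in>UNIV - {b}. w$x * G$x$b) = 0" using st wb by simp
  have nn: "\<forall>x\<in>UNIV - {b}. 0 \<le> w$x * G$x$b"
    using rm wn unfolding rate_matrix_def by auto
  have "w$a * G$a$b = 0"
    using sum_nonneg_eq_0_iff[of "UNIV - {b}" "\<lambda>x. w$x * G$x$b"] s0 nn ab by auto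
  then show ?case using ab by simp
qed

lemma stationary_dist_pos:
  assumes erg: "ergodic_rate_matrix G" and q: "stationary_dist G q"
  shows "0 < q$x"
proof (rule ccontr)
  assume "\<not> 0 < q$x"
  moreover have "0 \<le> q$x" using q by (simp add: stationary_dist_def prob_simplex_def)
  ultimately have qx: "q$x = 0" by simp
  have "\<forall>z. q$z = 0"
  proof
    fix z
    show "q$z = 0"
      by (rule nonneg_invariant_zero_propagates[where G=G and y=x])
        (use erg q qx in \<open>auto simp: ergodic_rate_matrix_def stationary_dist_def prob_simplex_def\<close>)
  qed
  then have "(\<Sum>i\<in>UNIV. q$i) = 0" by simp
  moreover have "(\<Sum>i\<in>UNIV. q$i) = 1" using q by (simp add: stationary_dist_def prob_simplex_def)
  ultimately show False by simp
qed

lemma stationary_dist_unique: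
  fixes G :: "real^'d^'d"
  assumes erg: "ergodic_rate_matrix G" and p: "stationary_dist G p" and q: "stationary_dist G q"
  shows "p = q"
proof -
  have qpos: "\<And>x. 0 < q$x" using stationary_dist_pos[OF erg q] .
  define c where "c = Min ((\<lambda>x. p$x / q$x) ` UNIV)"
  obtain y where y: "c = p$y / q$y"
  proof -
    have "c \<in> (\<lambda>x. p$x / q$x) ` UNIV" unfolding c_def by (rule Min_in) auto
    then show ?thesis using that by blast
  qed
  have cle: "\<And>x. c \<le> p$x / q$x" unfolding c_def by simp
  define w where "w = p - c *\<^sub>R q"
  have wn: "\<forall>x. 0 \<le> w$x"
  proof
    fix x
    have "c * q$x \<le> p$x" using cle[of x] qpos[of x] by (simp add: pos_le_divide_eq)
    then show "0 \<le> w$x" by (simp add: w_def)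
  qed
  have st: "\<forall>z. (\<Sum>x\<in>UNIV. w$x * G$x$z) = 0"
  proof
    fix z
    have "(\<Sum>x\<in>UNIV. w$x * G$x$z) = (\<Sum>x\<in>UNIV. p$x * G$x$z) - c * (\<Sum>x\<in>UNIV. q$x * G$x$z)"
      by (simp add: w_def algebra_simps sum_subtractf sum_distrib_left)
    then show "(\<Sum>x\<in>UNIV. w$x * G$x$z) = 0"
      using p q by (simp add: stationary_dist_def)
  qed
  have wy: "w$y = 0" using y qpos[of y] by (simp add: w_def)
  have w0: "\<forall>x. w$x = 0"
  proof
    fix x
    show "w$x = 0"
      by (rule nonneg_invariant_zero_propagates[where G=G and y=y]) (use erg wn st wy in \<open>auto simp: ergodic_rate_matrix_def\<close>)
  qed
  then have pc: "\<And>x. p$x = c * q$x" by (simp add: w_def)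
  have "(\<Sum>i\<in>UNIV. p$i) = c * (\<Sum>i\<in>UNIV. q$i)" by (simp add: pc sum_distrib_left)
  then have "c = 1" using p q by (simp add: stationary_dist_def prob_simplex_def)
  then show ?thesis using pc by (simp add: vec_eq_iff)
qed

lemma Gibbs_weight_ratio:
  fixes p :: "real^'d"
  assumes "\<And>i. p$i = exp (- a i) / (\<Sum>j\<in>UNIV. exp (- a j))"
  shows "p$y / p$x = exp (- (a y - a x))"
proof -
  define Z where "Z = (\<Sum>j\<in>UNIV. exp (- a j))"
  have "Z > 0" unfolding Z_def by (rule sum_pos) auto
  have "p$y / p$x = (exp (- a y) / Z) / (exp (- a x) / Z)" using assms by (simp add: Z_def)
  also have "\<dots> = exp (- a y) / exp (- a x)" using \<open>Z > 0\<close> by simp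
  finally show ?thesis by (simp add: exp_diff[symmetric])
qed

lemma locally_GibbsI_weights:
  assumes erg: "\<forall>r\<in>prob_simplex. ergodic_rate_matrix (\<Gamma> r) \<and> stationary_dist (\<Gamma> r) (\<pi> r)"
    and U: "C1_on prob_simplex U"
    and weights: "\<And>r i. r \<in> prob_simplex \<Longrightarrow> \<pi> r $ i = exp (- a r i) / (\<Sum>j\<in>UNIV. exp (- a r j))"
    and dir: "\<And>r x y. r \<in> prob_simplex \<Longrightarrow> dir_deriv U (unit_vec y - unit_vec x) r = a r y - a r x"
  shows "locally_Gibbs \<Gamma> U"
proof -
  have "p$y / p$x = exp (- dir_deriv U (unit_vec y - unit_vec x) r)"
    if r: "r \<in> prob_simplex" and p: "stationary_dist (\<Gamma> r) p" for r p x y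
  proof -
    have "p = \<pi> r" using stationary_dist_unique erg r p by blast
    then show ?thesis using Gibbs_weight_ratio[of p "a r"] weights[OF r] dir[OF r] by simp
  qed
  then show ?thesis unfolding locally_Gibbs_def using erg U by blast
qed

theorem lemma6p7:
  fixes \<Gamma> :: "real^'d \<Rightarrow> real^'d^'d"
    and \<pi> :: "real^'d \<Rightarrow> real^'d"
    and R :: "'d \<Rightarrow> real \<Rightarrow> real"
    and K :: "'d \<Rightarrow> real^'d \<Rightarrow> real"
  assumes erg: "\<forall>r\<in>prob_simplex. ergodic_rate_matrix (\<Gamma> r) \<and> stationary_dist (\<Gamma> r) (\<pi> r)"
    and R_cont: "\<forall>x. continuous_on {0..1} (R x)"
    and K_C1: "\<forall>x. C1_on prob_simplex (K x)"
    and gibbs: "\<forall>r\<in>prob_simplex. \<forall>x.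
       \<pi> r $ x =
         exp (- (K x r + (\<Sum>z\<in>UNIV. (grad (K z) r $ x) * r$z)) - R x (r$x)) /
         (\<Sum>x'\<in>UNIV. exp (- (K x' r + (\<Sum>z\<in>UNIV. (grad (K z) r $ x') * r$z)) - R x' (r$x')))"
  shows "locally_Gibbs \<Gamma>
           (\<lambda>r. \<Sum>z\<in>UNIV. oriented_integral 0 (r$z) (\<lambda>w. R z (clamp01 w)) + K z r * r$z)"
    (is "locally_Gibbs \<Gamma> ?U")
proof -
  obtain A DK where A: "openin (top_of_set H1) A" "prob_simplex \<subseteq> A"
    and DK: "\<And>x r. r \<in> A \<Longrightarrow> DK x r \<in> H0 \<and> (K x has_derivative (\<lambda>v. DK x r \<bullet> v)) (at r within A)"
      "\<And>x. continuous_on A (DK x)"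
    using C1_on_common_domain[OF K_C1] by blast
  define g where "g = potential_grad (\<lambda>z w. R z (clamp01 w)) K DK"
  have Rc: "continuous_on UNIV (\<lambda>w. R z (clamp01 w))" for z
    using continuous_on_clamp01_comp R_cont by blast
  have "continuous_on A (K z)" for z
    using DK(1) has_derivative_continuous by (metis continuous_on_eq_continuous_within)
  then have g_cont: "continuous_on A g"
    unfolding g_def using Rc DK(2) by (intro continuous_on_potential_grad)
  have U_deriv: "(?U has_derivative (\<lambda>v. g r \<bullet> v)) (at r within A)" if "r \<in> A" for r
    unfolding g_def using has_real_derivative_oriented_integral[OF Rc] DK(1)[OF that]
    by (intro has_derivative_potential) auto
  have U_C1: "C1_on prob_simplex ?U"
    using U_deriv by (rule C1_on_if_continuous_gradient(1)[OF A g_cont])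
  have U_grad: "grad ?U r \<bullet> v = g r \<bullet> v" if "r \<in> A" "v \<in> H0" for r v
    using U_deriv that by (rule C1_on_if_continuous_gradient(2)[OF A g_cont])
  have grad_K: "grad (K z) r = DK z r" if "r \<in> prob_simplex" for z r
    using grad_eqI[OF A(1)] A(2) DK(1) that by blast
  show ?thesis
  proof (rule locally_GibbsI_weights[OF erg U_C1])
    fix r :: "real^'d" and i assume r: "r \<in> prob_simplex"
    have "- (K i r + (\<Sum>z\<in>UNIV. grad (K z) r $ i * r$z)) - R i (r$i) = - g r $ i" for i
      by (simp add: g_def potential_grad_def clamp01_simplex_component[OF r] grad_K[OF r] mult.commute)
    then show "\<pi> r $ i = exp (- g r $ i) / (\<Sum>j\<in>UNIV. exp (- g r $ j))"
      using gibbs r by simp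
  next
    fix r :: "real^'d" and x y assume "r \<in> prob_simplex"
    then have "dir_deriv ?U (unit_vec y - unit_vec x) r = g r \<bullet> (unit_vec y - unit_vec x)"
      using U_grad[OF _ unit_vec_diff_in_H0] A(2) unfolding dir_deriv_def by blast
    then show "dir_deriv ?U (unit_vec y - unit_vec x) r = g r $ y - g r $ x"
      by (simp add: unit_vec_def inner_diff_right inner_axis)
  qed
qed

end
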